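(* Let $X$ be a complete metric space, $\mathcal Z_{\mathcal S}=(X,(\phi_j)_{j=0}^{n-1},(\rho_j)_{j=0}^{n-1})$ a Matkowski contractive GIFZS of degree $m$ with fuzzy attractor $u_{\mathcal Z}$, $\mathcal S=(X,(\phi_j)_{j=0}^{n-1})$ with attractor $A_{\mathcal S}$, $I=\{j:\rho_j(1)=1\}$, and $\mathcal S'=(X,(\phi_j)_{j\in I})$ with attractor $A_{\mathcal S'}$. Then: (1) $[u_{\mathcal Z}]^0\subseteq A_{\mathcal S}$, and if $r_+^j=0$ for all $j$, then $[u_{\mathcal Z}]^0=A_{\mathcal S}$; (2) $A_{\mathcal S'}\subseteq[u_{\mathcal Z}]^1$, and if $\beta_j(1)=1$ for all $j\in I$, then $A_{\mathcal S'}=[u_{\mathcal Z}]^1$; (3) if $I=\{0,\dots,n-1\}$, then $u_{\mathcal Z}=\chi_{A_{\mathcal S}}$.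
   Context: A fuzzy subset of $X$ is $u:X\to[0,1]$. For $\alpha\in(0,1]$, $[u]^\alpha=\{x:u(x)\ge\alpha\}$, $[u]^0=\overline{\{x:u(x)>0\}}$. $\mathcal F_X^*$: fuzzy subsets that are normal, usc and compactly supported. $\chi_A$ is the indicator function of $A$. $X^m$ has the maximum metric $d^m$. For $T:Z\to Y$, $T(u)(y)=\sup\{u(z):T(z)=y\}$ if $y\in T(Z)$, else $0$; $\rho(u)=\rho\circ u$; $(u_0\times\cdots\times u_{m-1})(x_0,\dots,x_{m-1})=\min_iu_i(x_i)$; $\vee$ is pointwise max. A family $(\rho_j)$ of maps $[0,1]\to[0,1]$ is admissible if each is nondecreasing, right continuous, $\rho_j(0)=0$, and $\rho_j(1)=1$ for some $j$. For each $j$: $r_+^j=\inf\{t:\rho_j(t)>0\}$ and $\beta_j(\alpha)=\inf\{t\in[0,1]:\rho_j(t)\ge\alpha\}$ for $\alpha\in[0,\rho_j(1)]$. A GIFS of degree $m$ is $(X,(\phi_j))$ with continuous $\phi_j:X^m\to X$; it is Matkowski contractive if each $\phi_j$ satisfies $d(\phi_j(x),\phi_j(y))\le\varphi_j(d^m(x,y))$ for some nondecreasing $\varphi_j$ with $\varphi_j^{(k)}(t)\to0$ for all $t>0$; on complete $X$ its attractor is the unique nonempty compact $A$ with $A=\bigcup_j\phi_j(A\times\cdots\times A)$. A GIFZS $(X,(\phi_j),(\rho_j))$ consists of such a GIFS and an admissible $(\rho_j)$; its operator is $\mathcal Z_{\mathcal S}(u_0,\dots,u_{m-1})=\bigvee_j\rho_j(\phi_j(u_0\times\cdots\times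 u_{m-1}))$, and its fuzzy attractor is the unique $u_{\mathcal Z}\in\mathcal F_X^*$ with $\mathcal Z_{\mathcal S}(u_{\mathcal Z},\dots,u_{\mathcal Z})=u_{\mathcal Z}$. *)

theory Defs
  imports "HOL-Analysis.Analysis"
begin

text \<open>Points of X^m are lists of length m; fuzzy subsets are real-valued maps with values in [0,1].\<close>

definition tuples :: "nat \<Rightarrow> 'a set \<Rightarrow> 'a list set" where
  "tuples m A = {xs. length xs = m \<and> set xs \<subseteq> A}"

definition dmax :: "'a::metric_space list \<Rightarrow> 'a list \<Rightarrow> real" where
  "dmax xs ys = Max (insert 0 {dist (xs ! i) (ys ! i) | i. i < length xs})"

definition fuzzy :: "('a \<Rightarrow> real) \<Rightarrow> bool" where
  "fuzzy u \<longleftrightarrow> (\<forall>x. 0 \<le> u x \<and> u x \<le> 1)"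

definition cut :: "('a::topological_space \<Rightarrow> real) \<Rightarrow> real \<Rightarrow> 'a set" where
  "cut u \<alpha> = (if \<alpha> = 0 then closure {x. u x > 0} else {x. \<alpha> \<le> u x})"

definition usc :: "('a::metric_space \<Rightarrow> real) \<Rightarrow> bool" where
  "usc u \<longleftrightarrow> (\<forall>x. \<forall>e>0. \<exists>d>0. \<forall>y. dist y x < d \<longrightarrow> u y < u x + e)"

definition FX :: "('a::metric_space \<Rightarrow> real) set" where
  "FX = {u. fuzzy u \<and> (\<exists>x. u x = 1) \<and> usc u \<and> compact (cut u 0)}"

definition fimg :: "('z \<Rightarrow> 'y) \<Rightarrow> 'z set \<Rightarrow> ('z \<Rightarrow> real) \<Rightarrow> 'y \<Rightarrow> real" where
  "fimg T Z u y = (if y \<in> T ` Z then Sup {u z | z. z \<in> Z \<and> T z = y} else 0)"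

definition fprod :: "('a \<Rightarrow> real) list \<Rightarrow> 'a list \<Rightarrow> real" where
  "fprod us xs = Min {(us ! i) (xs ! i) | i. i < length us}"

definition admissible :: "nat \<Rightarrow> (nat \<Rightarrow> real \<Rightarrow> real) \<Rightarrow> bool" where
  "admissible n \<rho> \<longleftrightarrow>
     (\<forall>j<n. (\<forall>t\<in>{0..1}. \<rho> j t \<in> {0..1})
        \<and> mono_on {0..1} (\<rho> j)
        \<and> (\<forall>t\<in>{0..<1}. continuous (at t within {t..1}) (\<rho> j))
        \<and> \<rho> j 0 = 0)
     \<and> (\<exists>j<n. \<rho> j 1 = 1)"

definition r_plus :: "(real \<Rightarrow> real) \<Rightarrow> real" where
  "r_plus r = (if {t\<in>{0..1}. r t > 0} = {} then 1 else Inf {t\<in>{0..1}. r t > 0})"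

definition beta :: "(real \<Rightarrow> real) \<Rightarrow> real \<Rightarrow> real" where
  "beta r \<alpha> = Inf {t\<in>{0..1}. r t \<ge> \<alpha>}"

definition continuous_m :: "nat \<Rightarrow> ('a::metric_space list \<Rightarrow> 'b::metric_space) \<Rightarrow> bool" where
  "continuous_m m f \<longleftrightarrow> (\<forall>xs\<in>tuples m UNIV. \<forall>e>0. \<exists>d>0. \<forall>ys\<in>tuples m UNIV.
       dmax xs ys < d \<longrightarrow> dist (f xs) (f ys) < e)"

definition matkowski :: "nat \<Rightarrow> ('a::metric_space list \<Rightarrow> 'a) \<Rightarrow> bool" where
  "matkowski m f \<longleftrightarrow> (\<exists>\<psi>::real \<Rightarrow> real. mono_on {0..} \<psi> \<and> \<psi> ` {0..} \<subseteq> {0..}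
       \<and> (\<forall>t>0. (\<lambda>k. (\<psi> ^^ k) t) \<longlonglongrightarrow> 0)
       \<and> (\<forall>xs\<in>tuples m UNIV. \<forall>ys\<in>tuples m UNIV. dist (f xs) (f ys) \<le> \<psi> (dmax xs ys)))"

definition mgifs :: "nat \<Rightarrow> nat set \<Rightarrow> (nat \<Rightarrow> 'a::metric_space list \<Rightarrow> 'a) \<Rightarrow> bool" where
  "mgifs m J \<phi> \<longleftrightarrow> (\<forall>j\<in>J. continuous_m m (\<phi> j) \<and> matkowski m (\<phi> j))"

definition gifs_attractor :: "nat \<Rightarrow> nat set \<Rightarrow> (nat \<Rightarrow> 'a::metric_space list \<Rightarrow> 'a) \<Rightarrow> 'a set \<Rightarrow> bool" where
  "gifs_attractor m J \<phi> A \<longleftrightarrow> A \<noteq> {} \<and> compact A \<and> A = (\<Union>j\<in>J. \<phi> j ` tuples m A)"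

definition gifzs_op :: "nat \<Rightarrow> nat \<Rightarrow> (nat \<Rightarrow> 'a list \<Rightarrow> 'a) \<Rightarrow> (nat \<Rightarrow> real \<Rightarrow> real)
    \<Rightarrow> ('a \<Rightarrow> real) list \<Rightarrow> 'a \<Rightarrow> real" where
  "gifzs_op m n \<phi> \<rho> us x = Max {\<rho> j (fimg (\<phi> j) (tuples m UNIV) (fprod us) x) | j. j < n}"

definition fuzzy_attractor :: "nat \<Rightarrow> nat \<Rightarrow> (nat \<Rightarrow> 'a::metric_space list \<Rightarrow> 'a) \<Rightarrow> (nat \<Rightarrow> real \<Rightarrow> real)
    \<Rightarrow> ('a \<Rightarrow> real) \<Rightarrow> bool" where
  "fuzzy_attractor m n \<phi> \<rho> u \<longleftrightarrow> u \<in> FX \<and> gifzs_op m n \<phi> \<rho> (replicate m u) = u"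

end

theory Submission
  imports Defs
begin

text \<open>Each cut of the fuzzy attractor is compared with a crisp attractor through a single
  principle: for a Matkowski contractive system, a compact set covered by its Hutchinson image
  lies inside every nonempty compact set mapped into itself (consider the point farthest from
  the second set). The fixed point equation \<open>u = max\<^sub>j \<rho>\<^sub>j(\<phi>\<^sub>j(u \<times> \<dots> \<times> u))\<close> shows that the
  support of \<open>u\<close> is covered by its image, and that the 1-cut is mapped into itself by the
  subsystem of maps with \<open>\<rho>\<^sub>j(1) = 1\<close>. The extra hypotheses give the reverse relations:
  \<open>r\<^sub>+ = 0\<close> makes the support invariant, and \<open>\<beta>\<^sub>j(1) = 1\<close> forces a point of the 1-cut to have
  full membership in some \<open>\<phi>\<^sub>j(u \<times> \<dots> \<times> u)\<close>, whose supremum is attained on the 1-cut by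
  compactness and upper semicontinuity.\<close>

definition hutchinson :: "nat \<Rightarrow> nat set \<Rightarrow> (nat \<Rightarrow> 'a list \<Rightarrow> 'a) \<Rightarrow> 'a set \<Rightarrow> 'a set" where
  "hutchinson m J \<phi> X = (\<Union>j\<in>J. \<phi> j ` tuples m X)"

lemma gifs_attractor_iff:
  "gifs_attractor m J \<phi> A \<longleftrightarrow> A \<noteq> {} \<and> compact A \<and> A = hutchinson m J \<phi> A"
  by (simp add: gifs_attractor_def hutchinson_def)

lemma tuples_iff_nth: "z \<in> tuples m X \<longleftrightarrow> length z = m \<and> (\<forall>i<m. z ! i \<in> X)"
  unfolding tuples_def by (auto simp: set_conv_nth)

lemma tuples_UNIV [simp]: "z \<in> tuples m UNIV \<longleftrightarrow> length z = m"
  by (simp add: tuples_iff_nth)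

lemma tuples_mono: "X \<subseteq> Y \<Longrightarrow> tuples m X \<subseteq> tuples m Y"
  unfolding tuples_def by auto

lemma hutchinson_mono: "X \<subseteq> Y \<Longrightarrow> hutchinson m J \<phi> X \<subseteq> hutchinson m J \<phi> Y"
  unfolding hutchinson_def by (intro UN_mono image_mono tuples_mono) auto

lemma dmax_nonneg: "0 \<le> dmax xs ys"
  unfolding dmax_def by (rule Max_ge) auto

lemma dmax_le_iff: "0 \<le> d \<Longrightarrow> dmax xs ys \<le> d \<longleftrightarrow> (\<forall>i<length xs. dist (xs ! i) (ys ! i) \<le> d)"
  unfolding dmax_def by (subst Max_le_iff) auto

lemma dmax_less_iff: "0 < d \<Longrightarrow> dmax xs ys < d \<longleftrightarrow> (\<forall>i<length xs. dist (xs ! i) (ys ! i) < d)"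
  unfolding dmax_def by (subst Max_less_iff) auto

subsection \<open>Matkowski contractions\<close>

lemma matkowski_gauge_less:
  fixes \<psi> :: "real \<Rightarrow> real"
  assumes mono: "mono_on {0..} \<psi>" and lim: "(\<lambda>k. (\<psi> ^^ k) t) \<longlonglongrightarrow> 0" and t: "t > 0"
  shows "\<psi> t < t"
proof (rule ccontr)
  assume "\<not> \<psi> t < t"
  then have "t \<le> (\<psi> ^^ k) t" for k
  proof (induction k)
    case (Suc k)
    then have "\<psi> t \<le> \<psi> ((\<psi> ^^ k) t)" using t by (intro mono_onD[OF mono]) auto
    with Suc.prems show ?case by simp
  qed simp
  then have "t \<le> 0" using LIMSEQ_le_const[OF lim] by blast
  with t show False by simp
qed

lemma matkowski_dist_less:
  assumes "matkowski m f" "length xs = m" "length ys = m" "0 < \<delta>" "dmax xs ys \<le> \<delta>"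
  shows "dist (f xs) (f ys) < \<delta>"
proof -
  obtain \<psi> :: "real \<Rightarrow> real" where mono: "mono_on {0..} \<psi>"
    and lim: "\<forall>t>0. (\<lambda>k. (\<psi> ^^ k) t) \<longlonglongrightarrow> 0"
    and contr: "\<forall>xs\<in>tuples m UNIV. \<forall>ys\<in>tuples m UNIV. dist (f xs) (f ys) \<le> \<psi> (dmax xs ys)"
    using assms(1) unfolding matkowski_def by blast
  have "dist (f xs) (f ys) \<le> \<psi> (dmax xs ys)" using contr assms(2,3) by simp
  also have "\<dots> \<le> \<psi> \<delta>" using assms(4,5) dmax_nonneg by (intro mono_onD[OF mono]) auto
  also have "\<dots> < \<delta>" using matkowski_gauge_less[OF mono] lim assms(4) by blast
  finally show ?thesis .
qed

lemma compact_infdist_attained: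
  assumes "compact Q" "Q \<noteq> {}"
  shows "\<exists>q\<in>Q. dist x q = infdist x Q"
proof -
  have "continuous_on Q (dist x)" by (intro continuous_intros)
  then obtain q where q: "q \<in> Q" "\<forall>y\<in>Q. dist x q \<le> dist x y"
    using continuous_attains_inf[OF assms] by blast
  have "dist x q \<le> infdist x Q"
    unfolding infdist_notempty[OF assms(2)] using q assms(2) by (intro cINF_greatest) auto
  with q infdist_le[of q Q x] show ?thesis by force
qed

lemma tuple_near_compact:
  assumes Q: "compact Q" "Q \<noteq> {}" and z: "z \<in> tuples m P"
    and \<delta>: "0 \<le> \<delta>" "\<forall>x\<in>P. infdist x Q \<le> \<delta>"
  obtains a where "a \<in> tuples m Q" "dmax z a \<le> \<delta>"
proof -
  have "\<forall>x. \<exists>q. q \<in> Q \<and> dist x q = infdist x Q"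
    using compact_infdist_attained[OF Q] by blast
  then obtain g where g: "\<forall>x. g x \<in> Q \<and> dist x (g x) = infdist x Q"
    by metis
  show ?thesis
  proof
    show "map g z \<in> tuples m Q" using z g by (simp add: tuples_iff_nth)
    show "dmax z (map g z) \<le> \<delta>" using z g \<delta> by (simp add: dmax_le_iff tuples_iff_nth)
  qed
qed

text \<open>If the point of \<open>P\<close> farthest from \<open>Q\<close> had positive distance, it would be the image of a
  tuple in \<open>P\<close>; replacing that tuple by nearest points of \<open>Q\<close> gives a point of \<open>Q\<close> strictly closer.\<close>

lemma hutchinson_subset:
  assumes mat: "\<forall>j\<in>J. matkowski m (\<phi> j)"
    and P: "compact P" "P \<subseteq> hutchinson m J \<phi> P"
    and Q: "compact Q" "Q \<noteq> {}" "hutchinson m J \<phi> Q \<subseteq> Q"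
  shows "P \<subseteq> Q"
proof (cases "P = {}")
  case False
  have "continuous_on P (\<lambda>x. infdist x Q)" by (intro continuous_intros)
  then obtain x0 where x0: "x0 \<in> P" and max: "\<forall>x\<in>P. infdist x Q \<le> infdist x0 Q"
    using continuous_attains_sup[OF P(1) False] by blast
  define \<delta> where "\<delta> = infdist x0 Q"
  have farthest: "\<forall>x\<in>P. infdist x Q \<le> \<delta>" using max \<delta>_def by simp
  have "\<delta> \<le> 0"
  proof (rule ccontr)
    assume "\<not> \<delta> \<le> 0"
    then have \<delta>: "0 < \<delta>" by simp
    obtain j z where j: "j \<in> J" and z: "z \<in> tuples m P" and x0z: "x0 = \<phi> j z"
      using x0 P(2) unfolding hutchinson_def by blast
    obtain a where a: "a \<in> tuples m Q" "dmax z a \<le> \<delta>"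
      using tuple_near_compact[OF Q(1,2) z less_imp_le[OF \<delta>] farthest] by blast
    have "dist x0 (\<phi> j a) < \<delta>"
      using matkowski_dist_less[OF mat[rule_format, OF j] _ _ \<delta> a(2)] z a(1) x0z
      by (simp add: tuples_iff_nth)
    moreover have "\<phi> j a \<in> Q" using Q(3) j a(1) unfolding hutchinson_def by blast
    ultimately show False using infdist_le[of "\<phi> j a" Q x0] \<delta>_def by simp
  qed
  then have "infdist x Q = 0" if "x \<in> P" for x
    using farthest that infdist_nonneg[of x Q] by (meson antisym order_trans)
  then show ?thesis
    using in_closed_iff_infdist_zero[OF compact_imp_closed[OF Q(1)] Q(2)] by blast
qed simp

lemma compact_componentwise_convergent_subseq:
  fixes f :: "nat \<Rightarrow> nat \<Rightarrow> 'a::metric_space"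
  assumes K: "compact K" and f: "\<forall>k. \<forall>i<m. f k i \<in> K"
  shows "\<exists>r l. strict_mono r \<and> (\<forall>i<m. l i \<in> K \<and> (\<lambda>k. f (r k) i) \<longlonglongrightarrow> l i)"
  using f
proof (induction m)
  case 0
  show ?case by (rule exI[of _ id]) (auto simp: strict_mono_def)
next
  case (Suc m)
  then obtain r l where r: "strict_mono r" "\<forall>i<m. l i \<in> K \<and> (\<lambda>k. f (r k) i) \<longlonglongrightarrow> l i"
    by auto
  have "\<forall>k. f (r k) m \<in> K" using Suc.prems by auto
  then obtain l' r' where l': "l' \<in> K" "strict_mono r'" "((\<lambda>k. f (r k) m) \<circ> r') \<longlonglongrightarrow> l'"
    using compact_imp_seq_compact[OF K] unfolding seq_compact_def by metis
  have "(\<lambda>k. f ((r \<circ> r') k) i) \<longlonglongrightarrow> (l(m := l')) i" if "i < Suc m" for i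
  proof (cases "i = m")
    case False
    with that r(2) have "(\<lambda>k. f (r k) i) \<longlonglongrightarrow> l i" by auto
    from LIMSEQ_subseq_LIMSEQ[OF this l'(2)] False show ?thesis by (simp add: comp_def)
  qed (use l'(3) in \<open>simp add: comp_def\<close>)
  moreover have "(l(m := l')) i \<in> K" if "i < Suc m" for i
    using that r(2) l'(1) by (cases "i = m") auto
  ultimately show ?case using strict_mono_o[OF r(1) l'(2)] by blast
qed

lemma tuples_convergent_subseq:
  fixes zs :: "nat \<Rightarrow> 'a::metric_space list"
  assumes "compact K" "\<forall>k. zs k \<in> tuples m K"
  obtains r z where "strict_mono r" "z \<in> tuples m K" "\<forall>i<m. (\<lambda>k. zs (r k) ! i) \<longlonglongrightarrow> z ! i"
proof -
  obtain r l where r: "strict_mono r" "\<forall>i<m. l i \<in> K \<and> (\<lambda>k. zs (r k) ! i) \<longlonglongrightarrow> l i"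
    using compact_componentwise_convergent_subseq[OF assms(1), where f="\<lambda>k i. zs k ! i" and m=m] assms(2)
    by (auto simp: tuples_iff_nth)
  show ?thesis
    by (rule that[of r "map l [0..<m]"]) (use r in \<open>auto simp: tuples_iff_nth\<close>)
qed

lemma continuous_m_tendsto:
  assumes f: "continuous_m m f" and z: "length z = m" and w: "\<forall>k. length (w k) = m"
    and lim: "\<forall>i<m. (\<lambda>k. w k ! i) \<longlonglongrightarrow> z ! i"
  shows "(\<lambda>k. f (w k)) \<longlonglongrightarrow> f z"
proof (rule tendstoI)
  fix e :: real assume "e > 0"
  moreover have "z \<in> tuples m UNIV" using z by simp
  ultimately obtain d where d: "d > 0" "\<forall>ys\<in>tuples m UNIV. dmax z ys < d \<longrightarrow> dist (f z) (f ys) < e"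
    using f unfolding continuous_m_def by blast
  have "\<forall>i\<in>{..<m}. eventually (\<lambda>k. dist (w k ! i) (z ! i) < d) sequentially"
    using lim d(1) by (auto intro: tendstoD)
  then have "eventually (\<lambda>k. \<forall>i\<in>{..<m}. dist (w k ! i) (z ! i) < d) sequentially"
    by (intro eventually_ball_finite) auto
  then show "eventually (\<lambda>k. dist (f (w k)) (f z) < e) sequentially"
  proof eventually_elim
    case (elim k)
    then have "dmax z (w k) < d" using d(1) z by (auto simp: dmax_less_iff dist_commute)
    then show ?case using d(2) w by (auto simp: dist_commute)
  qed
qed

lemma closed_image_tuples:
  assumes K: "compact K" and f: "continuous_m m f"
  shows "closed (f ` tuples m K)"
  unfolding closed_sequential_limits
proof (intro allI impI, elim conjE)
  fix y l assume y: "\<forall>k. y k \<in> f ` tuples m K" and yl: "y \<longlonglongrightarrow> l"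
  then have "\<forall>k. \<exists>z. z \<in> tuples m K \<and> y k = f z" by blast
  then obtain zs where zs: "\<forall>k. zs k \<in> tuples m K \<and> y k = f (zs k)" by metis
  then obtain r z where r: "strict_mono r" "z \<in> tuples m K"
    "\<forall>i<m. (\<lambda>k. zs (r k) ! i) \<longlonglongrightarrow> z ! i"
    using tuples_convergent_subseq[OF K] by metis
  have "(\<lambda>k. y (r k)) \<longlonglongrightarrow> f z"
    using continuous_m_tendsto[OF f _ _ r(3)] r(2) zs by (simp add: tuples_iff_nth)
  moreover have "(\<lambda>k. y (r k)) \<longlonglongrightarrow> l"
    using LIMSEQ_subseq_LIMSEQ[OF yl r(1)] by (simp add: comp_def)
  ultimately have "l = f z" using LIMSEQ_unique by blast
  then show "l \<in> f ` tuples m K" using r(2) by blast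
qed

lemma image_tuples_closure_subset:
  assumes f: "continuous_m m f"
  shows "f ` tuples m (closure S) \<subseteq> closure (f ` tuples m S)"
proof (rule image_subsetI)
  fix z assume z: "z \<in> tuples m (closure S)"
  then have "\<forall>i. \<exists>s. i < m \<longrightarrow> (\<forall>k. s k \<in> S) \<and> s \<longlonglongrightarrow> z ! i"
    by (auto simp: tuples_iff_nth closure_sequential)
  then obtain s where s: "\<forall>i<m. (\<forall>k. s i k \<in> S) \<and> s i \<longlonglongrightarrow> z ! i"
    by metis
  define w where "w k = map (\<lambda>i. s i k) [0..<m]" for k
  have "(\<lambda>k. f (w k)) \<longlonglongrightarrow> f z"
    using z s by (intro continuous_m_tendsto[OF f]) (auto simp: w_def tuples_iff_nth)
  moreover have "f (w k) \<in> f ` tuples m S" for k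
    using s by (auto simp: w_def tuples_iff_nth)
  ultimately show "f z \<in> closure (f ` tuples m S)"
    unfolding closure_sequential by (intro exI[of _ "\<lambda>k. f (w k)"]) blast
qed

lemma closed_hutchinson:
  assumes "finite J" "\<forall>j\<in>J. continuous_m m (\<phi> j)" "compact X"
  shows "closed (hutchinson m J \<phi> X)"
  unfolding hutchinson_def using assms by (intro closed_UN) (auto intro: closed_image_tuples)

lemma hutchinson_closure_subset:
  assumes "\<forall>j\<in>J. continuous_m m (\<phi> j)"
  shows "hutchinson m J \<phi> (closure S) \<subseteq> closure (hutchinson m J \<phi> S)"
  unfolding hutchinson_def
proof (intro UN_least)
  fix j assume j: "j \<in> J"
  then have "\<phi> j ` tuples m (closure S) \<subseteq> closure (\<phi> j ` tuples m S)"
    using image_tuples_closure_subset assms by blast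
  also have "\<dots> \<subseteq> closure (\<Union>j\<in>J. \<phi> j ` tuples m S)"
    using j by (intro closure_mono) blast
  finally show "\<phi> j ` tuples m (closure S) \<subseteq> closure (\<Union>j\<in>J. \<phi> j ` tuples m S)" .
qed

lemma cut_zero: "cut u 0 = closure {x. 0 < u x}"
  by (simp add: cut_def)

lemma cut_pos: "0 < \<alpha> \<Longrightarrow> cut u \<alpha> = {x. \<alpha> \<le> u x}"
  by (simp add: cut_def)

lemma closed_superlevel_usc:
  assumes "usc u"
  shows "closed {x. c \<le> u x}"
proof -
  have "open {x. u x < c}"
    unfolding open_dist
  proof (intro ballI)
    fix x assume "x \<in> {x. u x < c}"
    then obtain d where "d > 0" "\<forall>y. dist y x < d \<longrightarrow> u y < u x + (c - u x)"
      using assms unfolding usc_def by (metis diff_gt_0_iff_gt mem_Collect_eq)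
    then show "\<exists>e>0. \<forall>y. dist y x < e \<longrightarrow> y \<in> {x. u x < c}" by auto
  qed
  moreover have "- {x. c \<le> u x} = {x. u x < c}" by auto
  ultimately show ?thesis by (simp add: closed_def)
qed

lemma usc_tendsto_le:
  assumes "usc u" "y \<longlonglongrightarrow> l" "c \<longlonglongrightarrow> a" "\<forall>k. c k \<le> u (y k)"
  shows "a \<le> u l"
proof (rule ccontr)
  assume "\<not> a \<le> u l"
  define e where "e = (a - u l) / 2"
  have e: "0 < e" "a = u l + 2 * e" using \<open>\<not> a \<le> u l\<close> by (auto simp: e_def field_simps)
  then obtain d where d: "d > 0" "\<forall>z. dist z l < d \<longrightarrow> u z < u l + e"
    using assms(1) unfolding usc_def by blast
  have "eventually (\<lambda>k. dist (y k) l < d) sequentially"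
    using assms(2) d(1) by (rule tendstoD)
  moreover have "eventually (\<lambda>k. dist (c k) a < e) sequentially"
    using assms(3) e(1) by (rule tendstoD)
  ultimately obtain k where k: "dist (y k) l < d" "dist (c k) a < e"
    using eventually_happens'[OF sequentially_bot] eventually_conj by blast
  have "u (y k) < u l + e" using d(2) k(1) by blast
  moreover have "a - e < c k" using k(2) by (simp add: dist_real_def abs_less_iff)
  ultimately show False using assms(4)[rule_format, of k] e(2) by linarith
qed

lemma fuzzy_eq_indicator_of_cuts:
  assumes "fuzzy u" "cut u 0 \<subseteq> A" "A \<subseteq> cut u 1"
  shows "u = indicator A"
proof
  fix x
  show "u x = indicator A x"
  proof (cases "x \<in> A")
    case True
    then have "1 \<le> u x" using assms(3) by (auto simp: cut_pos)
    moreover have "u x \<le> 1" using assms(1) by (simp add: fuzzy_def)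
    ultimately show ?thesis using True by simp
  next
    case False
    then have "x \<notin> {x. 0 < u x}" using assms(2) closure_subset[of "{x. 0 < u x}"]
      by (auto simp: cut_zero)
    moreover have "0 \<le> u x" using assms(1) by (simp add: fuzzy_def)
    ultimately show ?thesis using False by simp
  qed
qed

lemma fprod_replicate: "fprod (replicate m u) z = Min {u (z ! i) |i. i < m}"
proof -
  have "{(replicate m u ! i) (z ! i) |i. i < length (replicate m u)} = {u (z ! i) |i. i < m}"
    by auto (metis nth_replicate)
  then show ?thesis by (simp add: fprod_def)
qed

lemma less_fprod_replicate_iff:
  "0 < m \<Longrightarrow> c < fprod (replicate m u) z \<longleftrightarrow> (\<forall>i<m. c < u (z ! i))"
  unfolding fprod_replicate by (subst Min_gr_iff) auto

lemma le_fprod_replicate_iff: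
  "0 < m \<Longrightarrow> c \<le> fprod (replicate m u) z \<longleftrightarrow> (\<forall>i<m. c \<le> u (z ! i))"
  unfolding fprod_replicate by (subst Min_ge_iff) auto

lemma fuzzy_fprod_replicate:
  assumes "0 < m" "fuzzy u"
  shows "fuzzy (fprod (replicate m u))"
  unfolding fuzzy_def
proof
  fix z
  have "u (z ! 0) \<le> 1" using assms(2) by (simp add: fuzzy_def)
  then have "\<not> 1 < fprod (replicate m u) z"
    using assms(1) less_fprod_replicate_iff[of m 1 u z] by auto
  then show "0 \<le> fprod (replicate m u) z \<and> fprod (replicate m u) z \<le> 1"
    using assms le_fprod_replicate_iff[of m 0 u z] by (auto simp: fuzzy_def)
qed

lemma bdd_above_fibre_values:
  assumes "fuzzy F"
  shows "bdd_above {F z |z. z \<in> Z \<and> T z = y}"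
  by (rule bdd_aboveI[of _ 1]) (use assms in \<open>auto simp: fuzzy_def\<close>)

lemma fimg_ge:
  assumes "fuzzy F" "z \<in> Z"
  shows "F z \<le> fimg T Z F (T z)"
proof -
  have "F z \<in> {F z' |z'. z' \<in> Z \<and> T z' = T z}" using assms(2) by blast
  from cSup_upper[OF this bdd_above_fibre_values[OF assms(1)]]
  show ?thesis using assms(2) by (simp add: fimg_def)
qed

lemma fuzzy_fimg:
  assumes "fuzzy F"
  shows "fuzzy (fimg T Z F)"
  unfolding fuzzy_def
proof
  fix y
  show "0 \<le> fimg T Z F y \<and> fimg T Z F y \<le> 1"
  proof (cases "y \<in> T ` Z")
    case True
    then obtain z where z: "z \<in> Z" "T z = y" by blast
    moreover have "0 \<le> F z" using assms by (simp add: fuzzy_def)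
    ultimately have "0 \<le> fimg T Z F y" using fimg_ge[OF assms z(1), of T] by simp
    moreover have "Sup {F z |z. z \<in> Z \<and> T z = y} \<le> 1"
      by (rule cSup_least) (use z assms in \<open>auto simp: fuzzy_def\<close>)
    ultimately show ?thesis using True by (simp add: fimg_def)
  qed (simp add: fimg_def)
qed

lemma less_fimg_imp:
  assumes "fuzzy F" "0 \<le> c" "c < fimg T Z F y"
  shows "\<exists>z\<in>Z. T z = y \<and> c < F z"
proof -
  have y: "y \<in> T ` Z" using assms(2,3) by (auto simp: fimg_def split: if_splits)
  then have "{F z |z. z \<in> Z \<and> T z = y} \<noteq> {}" by auto
  with assms(3) y show ?thesis
    by (auto simp: fimg_def less_cSup_iff[OF _ bdd_above_fibre_values[OF assms(1)]])
qed

lemma r_plus_zero_imp_pos: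
  assumes mono: "mono_on {0..1} r" and r: "r_plus r = 0" and t: "0 < t" "t \<le> 1"
  shows "0 < r t"
proof -
  define E where "E = {t\<in>{0..1}. r t > 0}"
  have E: "E \<noteq> {}" "Inf E = 0" using r unfolding r_plus_def E_def by (auto split: if_splits)
  have "bdd_below E" unfolding E_def by (intro bdd_belowI[of _ 0]) auto
  then obtain s where s: "s \<in> E" "s < t" using cInf_less_iff[OF E(1)] E(2) t(1) by auto
  have "r s \<le> r t" using s t unfolding E_def by (intro mono_onD[OF mono]) auto
  with s show ?thesis unfolding E_def by auto
qed

lemma beta_le:
  assumes "0 \<le> t" "t \<le> 1" "\<alpha> \<le> r t"
  shows "beta r \<alpha> \<le> t"
proof -
  have "bdd_below {s \<in> {0..1}. \<alpha> \<le> r s}" by (rule bdd_belowI[of _ 0]) auto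
  then show ?thesis unfolding beta_def using assms by (intro cInf_lower) auto
qed

subsection \<open>Cuts of a fuzzy attractor\<close>

locale gifzs_fixpoint =
  fixes m n :: nat
    and \<phi> :: "nat \<Rightarrow> 'a::metric_space list \<Rightarrow> 'a"
    and \<rho> :: "nat \<Rightarrow> real \<Rightarrow> real"
    and u :: "'a \<Rightarrow> real"
  assumes degree_pos: "0 < m"
    and continuous: "\<forall>j\<in>{..<n}. continuous_m m (\<phi> j)"
    and admissible: "admissible n \<rho>"
    and fixpoint: "fuzzy_attractor m n \<phi> \<rho> u"
begin

definition fimage :: "nat \<Rightarrow> 'a \<Rightarrow> real" where
  "fimage j = fimg (\<phi> j) (tuples m UNIV) (fprod (replicate m u))"

lemma rho_range: "j < n \<Longrightarrow> 0 \<le> t \<Longrightarrow> t \<le> 1 \<Longrightarrow> 0 \<le> \<rho> j t \<and> \<rho> j t \<le> 1"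
  and rho_mono: "j < n \<Longrightarrow> mono_on {0..1} (\<rho> j)"
  and rho_zero: "j < n \<Longrightarrow> \<rho> j 0 = 0"
  and index_pos: "0 < n"
  using admissible unfolding admissible_def by auto

lemma u_fuzzy: "fuzzy u"
  and usc_u: "usc u"
  and compact_cut0: "compact (cut u 0)"
  and normal: "\<exists>x. u x = 1"
  using fixpoint unfolding fuzzy_attractor_def FX_def by auto

lemma fuzzy_fprod: "fuzzy (fprod (replicate m u))"
  using fuzzy_fprod_replicate[OF degree_pos u_fuzzy] .

lemma fuzzy_fimage: "fuzzy (fimage j)"
  unfolding fimage_def using fuzzy_fimg[OF fuzzy_fprod] .

lemma u_range: "0 \<le> u x" "u x \<le> 1"
  using u_fuzzy by (simp_all add: fuzzy_def)

lemma fimage_range: "0 \<le> fimage j x" "fimage j x \<le> 1"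
  using fuzzy_fimage[of j] by (simp_all add: fuzzy_def)

lemma fprod_le_fimage: "length z = m \<Longrightarrow> fprod (replicate m u) z \<le> fimage j (\<phi> j z)"
  unfolding fimage_def using fimg_ge[OF fuzzy_fprod, where Z="tuples m UNIV" and T="\<phi> j"]
  by simp

lemma less_fimage_imp:
  assumes "0 \<le> c" "c < fimage j x"
  shows "\<exists>z. length z = m \<and> \<phi> j z = x \<and> (\<forall>i<m. c < u (z ! i))"
proof -
  obtain z where z: "z \<in> tuples m UNIV" "\<phi> j z = x" "c < fprod (replicate m u) z"
    using less_fimg_imp[OF fuzzy_fprod assms(1) assms(2)[unfolded fimage_def]] by blast
  have "\<forall>i<m. c < u (z ! i)" using z(3) less_fprod_replicate_iff[OF degree_pos] by blast
  with z(1,2) show ?thesis by (intro exI[of _ z]) simp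
qed

lemma u_eq_Max: "u x = Max {\<rho> j (fimage j x) |j. j < n}"
proof -
  have "u x = gifzs_op m n \<phi> \<rho> (replicate m u) x"
    using fixpoint unfolding fuzzy_attractor_def by simp
  also have "\<dots> = Max {\<rho> j (fimage j x) |j. j < n}"
    by (simp only: gifzs_op_def fimage_def)
  finally show ?thesis .
qed

lemma rho_fimage_le:
  assumes "j < n"
  shows "\<rho> j (fimage j x) \<le> u x"
proof -
  have "\<rho> j (fimage j x) \<le> Max {\<rho> j (fimage j x) |j. j < n}"
    using assms by (intro Max_ge) auto
  then show ?thesis by (simp only: u_eq_Max[symmetric])
qed

lemma exists_rho_fimage_eq: "\<exists>j<n. u x = \<rho> j (fimage j x)"
proof -
  have "Max {\<rho> j (fimage j x) |j. j < n} \<in> {\<rho> j (fimage j x) |j. j < n}"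
    using index_pos by (intro Max_in) auto
  then show ?thesis unfolding u_eq_Max[of x] by auto
qed

lemma cut1_subset_cut0: "cut u 1 \<subseteq> cut u 0"
  using closure_subset by (force simp: cut_pos cut_zero)

lemma compact_cut1: "compact (cut u 1)"
proof -
  have "cut u 1 = cut u 0 \<inter> {x. 1 \<le> u x}" using cut1_subset_cut0 by (auto simp: cut_pos)
  then show ?thesis using compact_cut0 closed_superlevel_usc[OF usc_u] by auto
qed

lemma cut1_nonempty: "cut u 1 \<noteq> {}"
proof -
  obtain x where "u x = 1" using normal by blast
  then have "x \<in> cut u 1" by (simp add: cut_pos)
  then show ?thesis by blast
qed

lemma support_subset_hutchinson: "{x. 0 < u x} \<subseteq> hutchinson m {..<n} \<phi> {x. 0 < u x}"
proof
  fix x assume "x \<in> {x. 0 < u x}"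
  then obtain j where j: "j < n" "0 < \<rho> j (fimage j x)"
    using exists_rho_fimage_eq[of x] by auto
  then have "fimage j x \<noteq> 0" using rho_zero by auto
  then have "0 < fimage j x" using fimage_range(1)[of j x] by linarith
  then obtain z where "length z = m" "\<phi> j z = x" "\<forall>i<m. 0 < u (z ! i)"
    using less_fimage_imp[of 0] by blast
  then have "z \<in> tuples m {x. 0 < u x}" "x = \<phi> j z" by (simp_all add: tuples_iff_nth)
  with j(1) show "x \<in> hutchinson m {..<n} \<phi> {x. 0 < u x}"
    unfolding hutchinson_def by blast
qed

lemma cut0_subset_hutchinson: "cut u 0 \<subseteq> hutchinson m {..<n} \<phi> (cut u 0)"
proof -
  have "{x. 0 < u x} \<subseteq> hutchinson m {..<n} \<phi> (cut u 0)"
    using support_subset_hutchinson hutchinson_mono[OF closure_subset] unfolding cut_zero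
    by (rule order_trans)
  then have "cut u 0 \<subseteq> closure (hutchinson m {..<n} \<phi> (cut u 0))"
    unfolding cut_zero[of u] by (rule closure_mono)
  also have "\<dots> = hutchinson m {..<n} \<phi> (cut u 0)"
    using closed_hutchinson[OF _ continuous compact_cut0] by simp
  finally show ?thesis .
qed

lemma hutchinson_support_subset:
  assumes "\<forall>j<n. r_plus (\<rho> j) = 0"
  shows "hutchinson m {..<n} \<phi> {x. 0 < u x} \<subseteq> {x. 0 < u x}"
  unfolding hutchinson_def
proof (intro UN_least image_subsetI)
  fix j z assume j: "j \<in> {..<n}" and z: "z \<in> tuples m {x. 0 < u x}"
  have "0 < fprod (replicate m u) z"
    using z less_fprod_replicate_iff[OF degree_pos, of 0 u z] by (simp add: tuples_iff_nth)
  also have "\<dots> \<le> fimage j (\<phi> j z)" using fprod_le_fimage z by (simp add: tuples_iff_nth)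
  finally have "0 < \<rho> j (fimage j (\<phi> j z))"
    using r_plus_zero_imp_pos[OF rho_mono] assms j fimage_range(2) by simp
  also have "\<dots> \<le> u (\<phi> j z)" using rho_fimage_le j by simp
  finally show "\<phi> j z \<in> {x. 0 < u x}" by simp
qed

lemma hutchinson_cut0_subset:
  assumes "\<forall>j<n. r_plus (\<rho> j) = 0"
  shows "hutchinson m {..<n} \<phi> (cut u 0) \<subseteq> cut u 0"
proof -
  have "hutchinson m {..<n} \<phi> (cut u 0) \<subseteq> closure (hutchinson m {..<n} \<phi> {x. 0 < u x})"
    unfolding cut_zero using continuous by (rule hutchinson_closure_subset)
  also have "\<dots> \<subseteq> cut u 0"
    unfolding cut_zero using hutchinson_support_subset[OF assms] by (rule closure_mono)
  finally show ?thesis .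
qed

lemma hutchinson_cut1_subset:
  "hutchinson m {j. j < n \<and> \<rho> j 1 = 1} \<phi> (cut u 1) \<subseteq> cut u 1"
  unfolding hutchinson_def
proof (intro UN_least image_subsetI)
  fix j z assume j: "j \<in> {j. j < n \<and> \<rho> j 1 = 1}" and z: "z \<in> tuples m (cut u 1)"
  have "1 \<le> fprod (replicate m u) z"
    using z le_fprod_replicate_iff[OF degree_pos, of 1 u z] by (simp add: tuples_iff_nth cut_pos)
  also have "\<dots> \<le> fimage j (\<phi> j z)" using fprod_le_fimage z by (simp add: tuples_iff_nth)
  finally have "fimage j (\<phi> j z) = 1" using fimage_range(2) by (rule antisym[rotated])
  then have "1 \<le> u (\<phi> j z)" using rho_fimage_le[of j "\<phi> j z"] j by simp
  then show "\<phi> j z \<in> cut u 1" by (simp add: cut_pos)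
qed

text \<open>The supremum defining \<open>fimage j x = 1\<close> is attained on the 1-cut: approximate maximisers
  lie in the compact support, and a limit of them has full membership by upper semicontinuity.\<close>

lemma fimage_eq_one_imp:
  assumes j: "j < n" and x: "fimage j x = 1"
  shows "\<exists>z\<in>tuples m (cut u 1). \<phi> j z = x"
proof -
  define c :: "nat \<Rightarrow> real" where "c = (\<lambda>k. 1 - inverse (real (Suc k)))"
  have c: "0 \<le> c k" "c k < 1" for k by (simp_all add: c_def field_simps)
  have "\<forall>k. \<exists>z. length z = m \<and> \<phi> j z = x \<and> (\<forall>i<m. c k < u (z ! i))"
    using less_fimage_imp c x by simp
  then obtain zs where len: "\<forall>k. length (zs k) = m" and fibre: "\<forall>k. \<phi> j (zs k) = x"
    and above: "\<forall>k. \<forall>i<m. c k < u (zs k ! i)"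
    by metis
  have "\<forall>k. zs k \<in> tuples m {x. 0 < u x}"
    using len above c(1) by (simp add: tuples_iff_nth) (meson le_less_trans)
  then have "\<forall>k. zs k \<in> tuples m (cut u 0)"
    using tuples_mono[OF closure_subset] unfolding cut_zero by blast
  then obtain r z where r: "strict_mono r" and z: "z \<in> tuples m (cut u 0)"
    and lim: "\<forall>i<m. (\<lambda>k. zs (r k) ! i) \<longlonglongrightarrow> z ! i"
    using tuples_convergent_subseq[OF compact_cut0] by metis
  have "(\<lambda>k. \<phi> j (zs (r k))) \<longlonglongrightarrow> \<phi> j z"
    using continuous_m_tendsto[OF continuous[rule_format] _ _ lim] j z len
    by (simp add: tuples_iff_nth)
  then have "\<phi> j z = x" using fibre LIMSEQ_unique[OF _ tendsto_const] by simp
  moreover have "1 \<le> u (z ! i)" if i: "i < m" for i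
  proof (rule usc_tendsto_le[OF usc_u lim[rule_format, OF i]])
    have "c \<longlonglongrightarrow> 1"
      using LIMSEQ_inverse_real_of_nat_add_minus[of 1] by (simp add: c_def)
    from LIMSEQ_subseq_LIMSEQ[OF this r] show "(\<lambda>k. c (r k)) \<longlonglongrightarrow> 1"
      by (simp add: comp_def)
    show "\<forall>k. c (r k) \<le> u (zs (r k) ! i)"
      using above i by (simp add: less_imp_le)
  qed
  ultimately show ?thesis using z by (auto simp: tuples_iff_nth cut_pos)
qed

lemma cut1_subset_hutchinson:
  assumes beta: "\<forall>j<n. \<rho> j 1 = 1 \<longrightarrow> beta (\<rho> j) 1 = 1"
  shows "cut u 1 \<subseteq> hutchinson m {j. j < n \<and> \<rho> j 1 = 1} \<phi> (cut u 1)"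
proof
  fix x assume "x \<in> cut u 1"
  then have ux: "u x = 1" using u_range(2)[of x] by (simp add: cut_pos)
  obtain j where j: "j < n" "u x = \<rho> j (fimage j x)"
    using exists_rho_fimage_eq by blast
  have "\<rho> j (fimage j x) \<le> \<rho> j 1"
    using fimage_range by (intro mono_onD[OF rho_mono[OF j(1)]]) auto
  then have rho1: "\<rho> j 1 = 1" using rho_range[OF j(1), of 1] j ux by simp
  have "beta (\<rho> j) 1 \<le> fimage j x" using beta_le[OF fimage_range] j ux by simp
  then have "fimage j x = 1" using beta j(1) rho1 fimage_range(2)[of j x] by simp
  then show "x \<in> hutchinson m {j. j < n \<and> \<rho> j 1 = 1} \<phi> (cut u 1)"
    using fimage_eq_one_imp j(1) rho1 unfolding hutchinson_def by blast
qed

end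

theorem mainTheorem16:
  fixes \<phi> :: "nat \<Rightarrow> 'a::complete_space list \<Rightarrow> 'a"
    and \<rho> :: "nat \<Rightarrow> real \<Rightarrow> real"
    and m n :: nat
    and u :: "'a \<Rightarrow> real"
    and A A' :: "'a set"
  assumes "m \<ge> 1"
    and "mgifs m {..<n} \<phi>"
    and "admissible n \<rho>"
    and "fuzzy_attractor m n \<phi> \<rho> u"
    and "gifs_attractor m {..<n} \<phi> A"
    and "gifs_attractor m {j. j < n \<and> \<rho> j 1 = 1} \<phi> A'"
  shows "(cut u 0 \<subseteq> A \<and> ((\<forall>j<n. r_plus (\<rho> j) = 0) \<longrightarrow> cut u 0 = A))
       \<and> (A' \<subseteq> cut u 1 \<and> ((\<forall>j<n. \<rho> j 1 = 1 \<longrightarrow> beta (\<rho> j) 1 = 1) \<longrightarrow> A' = cut u 1))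
       \<and> ({j. j < n \<and> \<rho> j 1 = 1} = {..<n} \<longrightarrow> u = indicator A)"
proof -
  interpret gifzs_fixpoint m n \<phi> \<rho> u
    using assms(1-4) by unfold_locales (auto simp: mgifs_def)
  let ?I = "{j. j < n \<and> \<rho> j 1 = 1}"
  have mat: "\<forall>j\<in>{..<n}. matkowski m (\<phi> j)" and mat': "\<forall>j\<in>?I. matkowski m (\<phi> j)"
    using assms(2) by (auto simp: mgifs_def)
  have A: "compact A" "A \<noteq> {}" "A = hutchinson m {..<n} \<phi> A"
    and A': "compact A'" "A' \<noteq> {}" "A' = hutchinson m ?I \<phi> A'"
    using assms(5,6) by (auto simp: gifs_attractor_iff)
  have "cut u 0 \<noteq> {}" using cut1_nonempty cut1_subset_cut0 by blast
  have cut0_A: "cut u 0 \<subseteq> A"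
    using hutchinson_subset[OF mat compact_cut0 cut0_subset_hutchinson A(1,2)] A(3) by blast
  moreover have "A \<subseteq> cut u 0" if "\<forall>j<n. r_plus (\<rho> j) = 0"
    using hutchinson_subset[OF mat A(1) equalityD1[OF A(3)] compact_cut0 \<open>cut u 0 \<noteq> {}\<close>
        hutchinson_cut0_subset[OF that]] .
  moreover have "A' \<subseteq> cut u 1"
    using hutchinson_subset[OF mat' A'(1) equalityD1[OF A'(3)] compact_cut1 cut1_nonempty
        hutchinson_cut1_subset] .
  moreover have "cut u 1 \<subseteq> A'" if "\<forall>j<n. \<rho> j 1 = 1 \<longrightarrow> beta (\<rho> j) 1 = 1"
    using hutchinson_subset[OF mat' compact_cut1 cut1_subset_hutchinson[OF that] A'(1,2)] A'(3)
    by blast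
  moreover have "u = indicator A" if I: "?I = {..<n}"
  proof -
    have "A \<subseteq> cut u 1"
      using hutchinson_subset[OF mat A(1) equalityD1[OF A(3)] compact_cut1 cut1_nonempty]
        hutchinson_cut1_subset unfolding I by blast
    then show ?thesis using fuzzy_eq_indicator_of_cuts[OF u_fuzzy cut0_A] by blast
  qed
  ultimately show ?thesis by blast
qed

end
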